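(* Let $d,k,m\in\mathbb{N}$ with $2k<m$, and let $N=m\cdot2(k+1)$. Let $\pi:\mathbb{Z}^d\to\mathbb{T}_N^d=\mathbb{Z}^d/(N\mathbb{Z})^d$ be the natural quotient map. Then for every set $\mathcal{S}\subset\mathbb{T}_N^d$ with $|\mathcal{S}|\le k$ there is some $\boldsymbol{v}\in\mathbb{Z}^d$ such that \[\bigcup_{\boldsymbol{t}\in\pi^{-1}(\mathcal{S})\cap(\boldsymbol{v}+[1,N]^d)}\big(\boldsymbol{t}+[-m,m]^d\big)\subset\boldsymbol{v}+[1,N]^d.\]
   Context: $[a,b]$ denotes the integer interval $\{a,a+1,\dots,b\}$ and $[a,b]^d$ its $d$-fold product in $\mathbb{Z}^d$. *)

theory Defs
  imports Main
begin

text \<open>Points of Z^d are modelled as functions nat => int that vanish outside {0..<d}.\<close>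

definition zvecs :: "nat \<Rightarrow> (nat \<Rightarrow> int) set" where
  "zvecs d = {x. \<forall>i\<ge>d. x i = 0}"

text \<open>The discrete torus T_N^d = Z^d/(NZ)^d, with canonical representatives in [0,N-1]^d.\<close>

definition torus :: "int \<Rightarrow> nat \<Rightarrow> (nat \<Rightarrow> int) set" where
  "torus N d = {x. (\<forall>i<d. 0 \<le> x i \<and> x i < N) \<and> (\<forall>i\<ge>d. x i = 0)}"

definition torus_proj :: "int \<Rightarrow> nat \<Rightarrow> (nat \<Rightarrow> int) \<Rightarrow> (nat \<Rightarrow> int)" where
  "torus_proj N d x = (\<lambda>i. if i < d then x i mod N else 0)"

definition cube :: "nat \<Rightarrow> (nat \<Rightarrow> int) \<Rightarrow> int \<Rightarrow> int \<Rightarrow> (nat \<Rightarrow> int) set" where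
  "cube d v a b = {x \<in> zvecs d. \<forall>i<d. v i + a \<le> x i \<and> x i \<le> v i + b}"

end

theory Submission
  imports Defs
begin

text \<open>Cut each coordinate axis, modulo N = 2m(k+1), into the k+1 blocks
  [2mj, 2mj+2m) of length 2m. The at most k points of S meet at most k of these
  blocks in coordinate i, so some block j_i is missed. Take the window
  v_i + [1,N] = [2mj_i + m, 2mj_i + m + N): its only residues lying in block j_i
  are its first m and its last m positions, so every point of the window whose
  residue avoids block j_i is at distance at least m from both ends.\<close>

lemma ex_not_in_image_if_card_le:
  fixes f :: "'a \<Rightarrow> int"
  assumes "finite S" and "card S \<le> k"
  shows "\<exists>j\<in>{0..int k}. j \<notin> f ` S"
proof (rule ccontr)
  assume "\<not> ?thesis"
  then have "{0..int k} \<subseteq> f ` S" by auto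
  then have "card {0..int k} \<le> card (f ` S)"
    using assms(1) by (intro card_mono) auto
  also have "\<dots> \<le> card S" using assms(1) by (rule card_image_le)
  finally show False using assms(2) by simp
qed

lemma window_avoiding_block:
  fixes m j t N :: int
  assumes m: "0 < m" and j: "0 \<le> j" "2*m*(j+1) \<le> N"
    and window: "2*m*j + m \<le> t" "t < 2*m*j + m + N"
    and avoids: "(t mod N) div (2*m) \<noteq> j"
  shows "2*m*j + m \<le> t - m \<and> t + m < 2*m*j + m + N"
proof (rule ccontr)
  have "0 \<le> 2*m*j" using m j by simp
  have "2*m*(j+1) = 2*m*j + 2*m" by (simp add: algebra_simps)
  assume "\<not> ?thesis"
  then consider "t < 2*m*j + 2*m" | "2*m*j + N \<le> t" by linarith
  then show False
  proof cases
    case 1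
    have "0 \<le> t" "t < N" using 1 j window m \<open>0 \<le> 2*m*j\<close> \<open>2*m*(j+1) = _\<close> by linarith+
    then have "t mod N = t" by simp
    moreover have "t div (2*m) = j"
      by (rule int_div_pos_eq[where r = "t - 2*m*j"]) (use window 1 in auto)
    ultimately show False using avoids by simp
  next
    case 2
    have "N \<le> t" "t - N < N" using 2 j window m \<open>0 \<le> 2*m*j\<close> \<open>2*m*(j+1) = _\<close> by linarith+
    then have "t mod N = t - N" by (metis minus_mod_self2 mod_pos_pos_trivial diff_ge_0_iff_ge)
    moreover have "(t - N) div (2*m) = j"
      by (rule int_div_pos_eq[where r = "t - N - 2*m*j"]) (use window m 2 in auto)
    ultimately show False using avoids by simp
  qed
qed

lemma cube_subset_cube:
  assumes "\<forall>i<d. v i + a \<le> t i + a' \<and> t i + b' \<le> v i + b"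
  shows "cube d t a' b' \<subseteq> cube d v a b"
  using assms by (fastforce simp: cube_def)

theorem proposition10:
  fixes d k m :: nat and N :: int and S :: "(nat \<Rightarrow> int) set"
  assumes "2 * k < m"
    and "N = int m * 2 * (int k + 1)"
    and "S \<subseteq> torus N d" and "finite S" and "card S \<le> k"
  shows "\<exists>v \<in> zvecs d.
           (\<Union>t \<in> {t \<in> zvecs d. torus_proj N d t \<in> S} \<inter> cube d v 1 N.
               cube d t (- int m) (int m))
           \<subseteq> cube d v 1 N"
proof -
  have "0 < int m" using assms(1) by simp
  have "\<forall>i. \<exists>j\<in>{0..int k}. j \<notin> (\<lambda>s. s i div (2 * int m)) ` S"
    using ex_not_in_image_if_card_le[OF assms(4,5)] by blast
  then obtain J where J: "\<And>i. J i \<in> {0..int k}"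
    and avoided: "\<And>i. J i \<notin> (\<lambda>s. s i div (2 * int m)) ` S"
    by metis
  define v where "v i = (if i < d then 2 * int m * J i + int m - 1 else 0)" for i
  have "cube d t (- int m) (int m) \<subseteq> cube d v 1 N"
    if "torus_proj N d t \<in> S" and "t \<in> cube d v 1 N" for t
  proof (rule cube_subset_cube, intro allI impI)
    fix i assume "i < d"
    have "(t i mod N) div (2 * int m) \<noteq> J i"
      using avoided[of i] that(1) \<open>i < d\<close> by (force simp: torus_proj_def)
    moreover have "2 * int m * (J i + 1) \<le> N"
      using J[of i] assms(2) \<open>0 < int m\<close> by (simp add: mult.commute)
    moreover have "2 * int m * J i + int m \<le> t i" "t i < 2 * int m * J i + int m + N"
      using that(2) \<open>i < d\<close> by (auto simp: cube_def v_def)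
    ultimately have
      "2 * int m * J i + int m \<le> t i - int m \<and> t i + int m < 2 * int m * J i + int m + N"
      using window_avoiding_block \<open>0 < int m\<close> J[of i] by simp
    then show "v i + 1 \<le> t i + - int m \<and> t i + int m \<le> v i + N"
      using \<open>i < d\<close> by (simp add: v_def)
  qed
  moreover have "v \<in> zvecs d" by (simp add: v_def zvecs_def)
  ultimately show ?thesis by blast
qed

end
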